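(* Consider the fifth-order WENO reconstruction of the numerical flux $\hat f_{i\pm\frac12}=\sum_{m=0}^{2}\omega_{m,i\pm\frac12}\hat f^m_{i\pm\frac12}$ on a uniform grid $x_i=x_0+i\Delta x$, for a smooth function $f$. Use the WENO-Z weights with $\epsilon=0$, $$\omega_{m}=\frac{\alpha_m}{\sum_{l=0}^2\alpha_l},\qquad \alpha_m=d_m\Bigl[1+\Bigl(\frac{\tau_5}{\beta^{DS}_{m}}\Bigr)^2\Bigr],\qquad (d_0,d_1,d_2)=\Bigl(\tfrac1{10},\tfrac6{10},\tfrac3{10}\Bigr),$$ where the modified smoothness indicators are $\beta^{DS}_{m,i\pm\frac12}=\beta_{m,i\pm\frac12}(\delta_{m,i}+C)$ and $\tau_5=|\beta_0-\beta_2|$. Assume the multipliers satisfy $\delta_{1,i}=\Phi(\bar x_i)$ and $\delta_{0,i}=\Phi(\bar x_i)+O(\Delta x)$, $\delta_{2,i}=\Phi(\bar x_i)+O(\Delta x)$ for some function $\Phi$ of the stencil $\bar x_i=(x_{i-k},\dots,x_{i+k})$, and that the constant $C$ is chosen so that $P(\bar x_i):=\Phi(\bar x_i)+C>\kappa>0$ for a fixed $\kappa$ (with $P=O(1)$). Then at non-critical points, i.e. where $f_x\neq 0$, $$\omega^{DS}_{m,i\pm\frac12}=d_m+O(\Delta x^6),\qquad m=0,1,2,$$ so in particular the sufficient condition $\omega_m^{\pm}-d_m=O(\Delta x^3)$ for fifth-order accuracy holds and the resulting WENO-Z scheme with the modified smoothness indicators is fifth-order accurate there.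
   Context: Fifth-order WENO: on the stencil $\{x_{i-2},\dots,x_{i+2}\}$, with $f_j=f(u(x_j))$, the candidate fluxes are $\hat f^0_{i+\frac12}=\frac{2f_{i-2}-7f_{i-1}+11f_i}{6}$, $\hat f^1_{i+\frac12}=\frac{-f_{i-1}+5f_i+2f_{i+1}}{6}$, $\hat f^2_{i+\frac12}=\frac{2f_i+5f_{i+1}-f_{i+2}}{6}$ (the $i-\frac12$ versions by shifting all indices by $-1$). The Jiang–Shu smoothness indicators for $\hat f_{i+\frac12}$ are $\beta_0=\frac{13}{12}(f_{i-2}-2f_{i-1}+f_i)^2+\frac14(f_{i-2}-4f_{i-1}+3f_i)^2$, $\beta_1=\frac{13}{12}(f_{i-1}-2f_i+f_{i+1})^2+\frac14(-f_{i-1}+f_{i+1})^2$, $\beta_2=\frac{13}{12}(f_i-2f_{i+1}+f_{i+2})^2+\frac14(3f_i-4f_{i+1}+f_{i+2})^2$; those for $\hat f_{i-\frac12}$ are obtained by index shift $-1$. For smooth $f$ these satisfy $\beta_m=f_x^2\Delta x^2+O(\Delta x^4)$ and $\tau_5=|\beta_0-\beta_2|=\frac{13}{3}|f_{xx}f_{xxx}|\Delta x^5+O(\Delta x^6)$. The same multiplier $\delta_{m,i}$ (depending only on the global stencil position $i$) is used for both $\beta_{m,i+\frac12}$ and $\beta_{m,i-\frac12}$; in the paper $\delta_{m,i}$ are outputs of a convolutional neural network with differentiable activations and receptive field of size $2k+1$, and $\delta_{0,i+1}=\delta_{1,i}=\delta_{2,i-1}$. *)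

theory Defs
  imports "HOL-Analysis.Analysis" "HOL-Library.Landau_Symbols"
begin

text \<open>Grid values are given as a function g :: int => real, g j = f(x_j).
  The Jiang--Shu smoothness indicators for the flux at j+1/2
  (the ones for j-1/2 are obtained by evaluating at j-1).\<close>

definition beta0 :: "(int \<Rightarrow> real) \<Rightarrow> int \<Rightarrow> real" where
  "beta0 g j = 13/12 * (g (j-2) - 2 * g (j-1) + g j)^2
             + 1/4 * (g (j-2) - 4 * g (j-1) + 3 * g j)^2"

definition beta1 :: "(int \<Rightarrow> real) \<Rightarrow> int \<Rightarrow> real" where
  "beta1 g j = 13/12 * (g (j-1) - 2 * g j + g (j+1))^2
             + 1/4 * (- g (j-1) + g (j+1))^2"

definition beta2 :: "(int \<Rightarrow> real) \<Rightarrow> int \<Rightarrow> real" where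
  "beta2 g j = 13/12 * (g j - 2 * g (j+1) + g (j+2))^2
             + 1/4 * (3 * g j - 4 * g (j+1) + g (j+2))^2"

definition weno_beta :: "(int \<Rightarrow> real) \<Rightarrow> int \<Rightarrow> nat \<Rightarrow> real" where
  "weno_beta g j m = (if m = 0 then beta0 g j else if m = 1 then beta1 g j else beta2 g j)"

definition tau5 :: "(int \<Rightarrow> real) \<Rightarrow> int \<Rightarrow> real" where
  "tau5 g j = \<bar>beta0 g j - beta2 g j\<bar>"

definition dlin :: "nat \<Rightarrow> real" where
  "dlin m = (if m = 0 then 1/10 else if m = 1 then 6/10 else 3/10)"

definition betaDS :: "(int \<Rightarrow> real) \<Rightarrow> int \<Rightarrow> (nat \<Rightarrow> real) \<Rightarrow> real \<Rightarrow> nat \<Rightarrow> real" where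
  "betaDS g j \<delta> C m = weno_beta g j m * (\<delta> m + C)"

definition alphaDS :: "(int \<Rightarrow> real) \<Rightarrow> int \<Rightarrow> (nat \<Rightarrow> real) \<Rightarrow> real \<Rightarrow> nat \<Rightarrow> real" where
  "alphaDS g j \<delta> C m = dlin m * (1 + (tau5 g j / betaDS g j \<delta> C m)^2)"

definition omegaDS :: "(int \<Rightarrow> real) \<Rightarrow> int \<Rightarrow> (nat \<Rightarrow> real) \<Rightarrow> real \<Rightarrow> nat \<Rightarrow> real" where
  "omegaDS g j \<delta> C m = alphaDS g j \<delta> C m / (\<Sum>l<3. alphaDS g j \<delta> C l)"

definition stencil :: "real \<Rightarrow> nat \<Rightarrow> real \<Rightarrow> real list" where
  "stencil x k h = map (\<lambda>j. x + real_of_int j * h) [- int k..int k]"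

end

theory Submission
  imports Defs "HOL-Real_Asymp.Real_Asymp"
begin

text \<open>
  Writing \<open>r\<^sub>l = (tau5 / betaDS\<^sub>l)\<^sup>2\<close>, the normalised weights satisfy
  \<open>|\<omega>\<^sub>m - d\<^sub>m| \<le> r\<^sub>0 + r\<^sub>1 + r\<^sub>2\<close>, so it suffices that \<open>tau5 / betaDS\<^sub>l = O(h\<^sup>3)\<close>.
  All quantities are built from linear combinations of the grid values \<open>f (x + j h)\<close>, whose
  Taylor expansions are governed by the moments of their coefficients. The difference
  \<open>\<beta>\<^sub>0 - \<beta>\<^sub>2\<close> factors into two products of combinations whose moments vanish below orders
  3 and 2, resp. 1 and 4, hence \<open>tau5 = O(h\<^sup>5)\<close>. Each \<open>\<beta>\<^sub>m\<close> dominates a quarter of the square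
  of a first-difference combination, which is \<open>\<Theta>(h)\<close> because \<open>f' x \<noteq> 0\<close>; together with
  \<open>\<delta>\<^sub>m + C \<ge> \<kappa>/2\<close> for small \<open>h\<close> this gives \<open>betaDS\<^sub>m \<ge> c h\<^sup>2\<close>.
\<close>

lemma taylor_remainder_bigo:
  fixes f :: "real \<Rightarrow> real"
  assumes smooth: "\<And>n y. ((deriv ^^ n) f has_real_derivative (deriv ^^ Suc n) f y) (at y)"
  shows "(\<lambda>t. f (x + t) - (\<Sum>n<N. (deriv ^^ n) f x / fact n * t ^ n)) \<in> O[nhds 0](\<lambda>t. t ^ N)"
proof -
  let ?D = "\<lambda>n. (deriv ^^ n) f"
  have "continuous_on {x-1..x+1} (?D N)"
    using smooth by (meson DERIV_isCont continuous_at_imp_continuous_on)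
  then obtain B where B: "\<And>y. y \<in> {x-1..x+1} \<Longrightarrow> \<bar>?D N y\<bar> \<le> B"
    using compact_continuous_image compact_imp_bounded bounded_iff
    by (metis compact_Icc image_eqI real_norm_def)
  have remainder: "\<bar>f (x + t) - (\<Sum>n<N. ?D n x / fact n * t ^ n)\<bar> \<le> B / fact N * \<bar>t ^ N\<bar>"
    if "\<bar>t\<bar> \<le> 1" for t
  proof -
    have "((\<lambda>y. ?D n (x + y)) has_real_derivative ?D (Suc n) (x + y)) (at y)" for n y
      using DERIV_shift[THEN iffD1, OF smooth[of n "y + x"]] by (simp add: add.commute)
    then obtain s where s: "\<bar>s\<bar> \<le> \<bar>t\<bar>"
      "f (x + t) = (\<Sum>n<N. ?D n x / fact n * t ^ n) + ?D N (x + s) / fact N * t ^ N"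
      using Maclaurin_all_le[of "\<lambda>n y. ?D n (x + y)" "\<lambda>y. f (x + y)" t N] by auto
    have "\<bar>?D N (x + s)\<bar> \<le> B"
      using s(1) that by (intro B) auto
    then have "\<bar>?D N (x + s) / fact N * t ^ N\<bar> \<le> B / fact N * \<bar>t ^ N\<bar>"
      by (simp add: abs_mult divide_right_mono mult_right_mono)
    then show ?thesis
      using s(2) by simp
  qed
  have "\<forall>\<^sub>F t in nhds 0. \<bar>t\<bar> \<le> (1::real)"
    unfolding eventually_nhds_metric by (intro exI[of _ 1]) (auto simp: dist_real_def)
  then show ?thesis
    by (intro bigoI[of _ "B / fact N"]) (auto elim!: eventually_mono dest!: remainder)
qed

definition stencil_comb :: "(int \<Rightarrow> real) \<Rightarrow> (real \<times> int) list \<Rightarrow> int \<Rightarrow> real" where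
  "stencil_comb g cs i = (\<Sum>(a, j)\<leftarrow>cs. a * g (i + j))"

definition stencil_moment :: "(real \<times> int) list \<Rightarrow> int \<Rightarrow> nat \<Rightarrow> real" where
  "stencil_moment cs i n = (\<Sum>(a, j)\<leftarrow>cs. a * real_of_int (i + j) ^ n)"

lemma stencil_comb_taylor:
  fixes f :: "real \<Rightarrow> real"
  assumes smooth: "\<And>n y. ((deriv ^^ n) f has_real_derivative (deriv ^^ Suc n) f y) (at y)"
  shows "(\<lambda>h. stencil_comb (\<lambda>j. f (x + real_of_int j * h)) cs i
            - (\<Sum>n<N. (deriv ^^ n) f x / fact n * stencil_moment cs i n * h ^ n))
         \<in> O[at_right 0](\<lambda>h. h ^ N)"
proof (induction cs)
  case Nil
  then show ?case by (simp add: stencil_comb_def stencil_moment_def)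
next
  case (Cons c cs)
  obtain a j where c: "c = (a, j)" by fastforce
  define t where "t = real_of_int (i + j)"
  have "filterlim (\<lambda>h. t * h) (nhds 0) (at_right 0)"
    by (auto intro!: tendsto_eq_intros)
  from landau_o.big.compose[OF taylor_remainder_bigo[OF smooth, of x N] this]
  have "(\<lambda>h. f (x + t * h) - (\<Sum>n<N. (deriv ^^ n) f x / fact n * (t * h) ^ n))
          \<in> O[at_right 0](\<lambda>h. (t * h) ^ N)"
    by simp
  also have "(\<lambda>h. (t * h) ^ N) \<in> O[at_right 0](\<lambda>h. h ^ N)"
    by (simp add: power_mult_distrib)
  finally have "(\<lambda>h. f (x + t * h) - (\<Sum>n<N. (deriv ^^ n) f x / fact n * (t * h) ^ n))
          \<in> O[at_right 0](\<lambda>h. h ^ N)" .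
  then have "(\<lambda>h. a * (f (x + t * h) - (\<Sum>n<N. (deriv ^^ n) f x / fact n * (t * h) ^ n)))
          \<in> O[at_right 0](\<lambda>h. h ^ N)"
    by simp
  from sum_in_bigo(1)[OF this Cons.IH] show ?case
    by (simp add: c t_def stencil_comb_def stencil_moment_def algebra_simps sum.distrib
        sum_distrib_left power_mult_distrib del: of_int_add)
qed

lemma stencil_comb_bigo:
  fixes f :: "real \<Rightarrow> real"
  assumes smooth: "\<And>n y. ((deriv ^^ n) f has_real_derivative (deriv ^^ Suc n) f y) (at y)"
    and moments: "\<And>n. n < N \<Longrightarrow> stencil_moment cs i n = 0"
  shows "(\<lambda>h. stencil_comb (\<lambda>j. f (x + real_of_int j * h)) cs i) \<in> O[at_right 0](\<lambda>h. h ^ N)"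
  using stencil_comb_taylor[OF smooth, of x cs i N] moments by simp

lemma stencil_comb_bigtheta:
  fixes f :: "real \<Rightarrow> real"
  assumes smooth: "\<And>n y. ((deriv ^^ n) f has_real_derivative (deriv ^^ Suc n) f y) (at y)"
    and "stencil_moment cs i 0 = 0" and "stencil_moment cs i 1 \<noteq> 0" and "deriv f x \<noteq> 0"
  shows "(\<lambda>h. stencil_comb (\<lambda>j. f (x + real_of_int j * h)) cs i) \<in> \<Theta>[at_right 0](\<lambda>h. h)"
proof -
  define c where "c = deriv f x * stencil_moment cs i 1"
  have "c \<noteq> 0"
    using assms by (simp add: c_def)
  have "(\<lambda>h. stencil_comb (\<lambda>j. f (x + real_of_int j * h)) cs i - c * h) \<in> O[at_right 0](\<lambda>h. h ^ 2)"
    using stencil_comb_taylor[OF smooth, of x cs i 2] assms(2)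
    by (simp add: numeral_2_eq_2 c_def mult_ac)
  also have "(\<lambda>h. h ^ 2) \<in> o[at_right 0](\<lambda>h. c * h)"
    using \<open>c \<noteq> 0\<close> by simp real_asymp
  finally have "(\<lambda>h. stencil_comb (\<lambda>j. f (x + real_of_int j * h)) cs i) \<sim>[at_right 0] (\<lambda>h. c * h)"
    by (rule smallo_imp_asymp_equiv)
  then show ?thesis
    using \<open>c \<noteq> 0\<close> by (auto dest: asymp_equiv_imp_bigtheta)
qed

lemma bigo_divide_by_lower_bound:
  fixes u v a b :: "'a \<Rightarrow> real"
  assumes "u \<in> O[F](a)" and "c > 0" and "\<forall>\<^sub>F x in F. 0 < b x \<and> c * b x \<le> v x"
  shows "(\<lambda>x. u x / v x) \<in> O[F](\<lambda>x. a x / b x)"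
proof (rule landau_o.big.divide)
  show "\<forall>\<^sub>F x in F. v x \<noteq> 0" "\<forall>\<^sub>F x in F. b x \<noteq> 0"
    using assms(3) \<open>c > 0\<close> by (auto elim!: eventually_mono simp: order.strict_iff_not)
      (smt (verit) mult_pos_pos)
  show "u \<in> O[F](a)"
    by fact
  show "b \<in> O[F](v)"
    using assms(3) \<open>c > 0\<close>
    by (intro bigoI[of _ "1 / c"]) (auto elim!: eventually_mono simp: field_simps)
qed

lemma eventually_gt_if_close:
  fixes u p :: "'a \<Rightarrow> real"
  assumes "(\<lambda>x. u x - p x) \<in> o[F](\<lambda>_. 1)" and "\<forall>\<^sub>F x in F. \<kappa> < p x" and "\<kappa>' < \<kappa>"
  shows "\<forall>\<^sub>F x in F. \<kappa>' < u x"
proof -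
  have "\<forall>\<^sub>F x in F. \<bar>u x - p x\<bar> \<le> \<kappa> - \<kappa>'"
    using landau_o.smallD[OF assms(1), of "\<kappa> - \<kappa>'"] \<open>\<kappa>' < \<kappa>\<close> by simp
  with assms(2) show ?thesis
    by eventually_elim linarith
qed

lemma normalized_weight_deviation:
  fixes d r :: "'a \<Rightarrow> real"
  assumes "finite I" and "m \<in> I" and d: "\<And>l. l \<in> I \<Longrightarrow> 0 \<le> d l"
    and r: "\<And>l. l \<in> I \<Longrightarrow> 0 \<le> r l" and "sum d I = 1"
  shows "\<bar>d m * (1 + r m) / (\<Sum>l\<in>I. d l * (1 + r l)) - d m\<bar> \<le> (\<Sum>l\<in>I. r l)"
proof -
  define X where "X = (\<Sum>l\<in>I. d l * r l)"
  have d_le_1: "d l \<le> 1" if "l \<in> I" for l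
  proof -
    have "d l \<le> sum d I"
      using that d \<open>finite I\<close> by (intro member_le_sum) auto
    then show ?thesis
      using \<open>sum d I = 1\<close> by simp
  qed
  have "0 \<le> X"
    unfolding X_def using d r by (simp add: sum_nonneg)
  have "X \<le> (\<Sum>l\<in>I. r l)"
    unfolding X_def using d d_le_1 r by (intro sum_mono) (simp add: mult_left_le_one_le)
  have "r m \<le> (\<Sum>l\<in>I. r l)"
    using \<open>m \<in> I\<close> r \<open>finite I\<close> by (intro member_le_sum) auto
  have "(\<Sum>l\<in>I. d l * (1 + r l)) = 1 + X"
    using \<open>sum d I = 1\<close> by (simp add: X_def distrib_left sum.distrib)
  moreover have "d m * (1 + r m) / (1 + X) - d m = d m * (r m - X) / (1 + X)"
    using \<open>0 \<le> X\<close> by (simp add: field_simps)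
  moreover have "\<bar>d m * (r m - X) / (1 + X)\<bar> \<le> \<bar>r m - X\<bar>"
  proof -
    have "\<bar>d m * (r m - X)\<bar> \<le> \<bar>r m - X\<bar>"
      using d[OF \<open>m \<in> I\<close>] d_le_1[OF \<open>m \<in> I\<close>] by (simp add: abs_mult mult_left_le_one_le)
    also have "\<dots> \<le> \<bar>r m - X\<bar> * (1 + X)"
      using mult_left_mono[of 1 "1 + X" "\<bar>r m - X\<bar>"] \<open>0 \<le> X\<close> by simp
    finally show ?thesis
      using \<open>0 \<le> X\<close> by (simp add: abs_divide divide_le_eq)
  qed
  ultimately have "\<bar>d m * (1 + r m) / (\<Sum>l\<in>I. d l * (1 + r l)) - d m\<bar> \<le> \<bar>r m - X\<bar>"
    by simp
  also have "\<bar>r m - X\<bar> \<le> (\<Sum>l\<in>I. r l)"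
    using \<open>0 \<le> X\<close> \<open>X \<le> (\<Sum>l\<in>I. r l)\<close> r[OF \<open>m \<in> I\<close>] \<open>r m \<le> (\<Sum>l\<in>I. r l)\<close> by linarith
  finally show ?thesis .
qed

lemma beta0_minus_beta2:
  "beta0 g i - beta2 g i =
     13/12 * stencil_comb g [(1,-2), (-2,-1), (2,1), (-1,2)] i
           * stencil_comb g [(1,-2), (-2,-1), (2,0), (-2,1), (1,2)] i
   + 1/4 * stencil_comb g [(1,-2), (-4,-1), (4,1), (-1,2)] i
         * stencil_comb g [(1,-2), (-4,-1), (6,0), (-4,1), (1,2)] i"
  unfolding beta0_def beta2_def stencil_comb_def by (simp add: power2_eq_square field_simps)

lemma weno_beta_ge_first_difference:
  assumes "m \<le> 2"
  obtains cs where "stencil_moment cs i 0 = 0" and "stencil_moment cs i 1 \<noteq> 0"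
    and "\<And>g. (stencil_comb g cs i)\<^sup>2 / 4 \<le> weno_beta g i m"
proof -
  consider "m = 0" | "m = 1" | "m = 2"
    using assms by linarith
  then show thesis
  proof cases
    case 1
    show thesis
      by (rule that[of "[(1,-2), (-4,-1), (3,0)]"])
        (simp_all add: 1 weno_beta_def beta0_def stencil_comb_def stencil_moment_def algebra_simps)
  next
    case 2
    show thesis
      by (rule that[of "[(-1,-1), (1,1)]"])
        (simp_all add: 2 weno_beta_def beta1_def stencil_comb_def stencil_moment_def algebra_simps)
  next
    case 3
    show thesis
      by (rule that[of "[(3,0), (-4,1), (1,2)]"])
        (simp_all add: 3 weno_beta_def beta2_def stencil_comb_def stencil_moment_def algebra_simps)
  qed
qed

lemma weno_beta_lower_bound:
  fixes f :: "real \<Rightarrow> real"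
  assumes smooth: "\<And>n y. ((deriv ^^ n) f has_real_derivative (deriv ^^ Suc n) f y) (at y)"
    and noncrit: "deriv f x \<noteq> 0" and "m \<le> 2"
  obtains c where "c > 0"
    and "\<forall>\<^sub>F h in at_right 0. c * h\<^sup>2 \<le> weno_beta (\<lambda>j. f (x + real_of_int j * h)) i m"
proof -
  obtain cs where cs: "stencil_moment cs i 0 = 0" "stencil_moment cs i 1 \<noteq> 0"
    "\<And>g. (stencil_comb g cs i)\<^sup>2 / 4 \<le> weno_beta g i m"
    using weno_beta_ge_first_difference[OF \<open>m \<le> 2\<close>] by blast
  let ?L = "\<lambda>h. stencil_comb (\<lambda>j. f (x + real_of_int j * h)) cs i"
  have "?L \<in> \<Omega>[at_right 0](\<lambda>h. h)"
    using stencil_comb_bigtheta[OF smooth cs(1,2) noncrit] by blast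
  then obtain b where "b > 0" and b: "\<forall>\<^sub>F h in at_right 0. b * norm h \<le> norm (?L h)"
    by (elim landau_omega.bigE)
  show thesis
  proof (rule that)
    show "b\<^sup>2 / 4 > 0"
      using \<open>b > 0\<close> by simp
    show "\<forall>\<^sub>F h in at_right 0. b\<^sup>2 / 4 * h\<^sup>2 \<le> weno_beta (\<lambda>j. f (x + real_of_int j * h)) i m"
      using b
    proof eventually_elim
      case (elim h)
      then have "(b * h)\<^sup>2 \<le> (?L h)\<^sup>2"
        using \<open>b > 0\<close> by (metis abs_mult abs_of_pos real_norm_def abs_le_square_iff)
      then show ?case
        using cs(3)[of "\<lambda>j. f (x + real_of_int j * h)"] by (simp add: power_mult_distrib)
    qed
  qed
qed

lemma tau5_bigo:
  fixes f :: "real \<Rightarrow> real"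
  assumes smooth: "\<And>n y. ((deriv ^^ n) f has_real_derivative (deriv ^^ Suc n) f y) (at y)"
  shows "(\<lambda>h. tau5 (\<lambda>j. f (x + real_of_int j * h)) i) \<in> O[at_right 0](\<lambda>h. h ^ 5)"
proof -
  let ?L = "\<lambda>cs h. stencil_comb (\<lambda>j. f (x + real_of_int j * h)) cs i"
  have "(\<lambda>h. ?L [(1,-2), (-2,-1), (2,1), (-1,2)] h * ?L [(1,-2), (-2,-1), (2,0), (-2,1), (1,2)] h)
          \<in> O[at_right 0](\<lambda>h. h ^ (3 + 2))"
    unfolding power_add
    by (intro landau_o.big.mult stencil_comb_bigo[OF smooth])
      (auto simp: stencil_moment_def less_Suc_eq numeral_eq_Suc algebra_simps)
  moreover have "(\<lambda>h. ?L [(1,-2), (-4,-1), (4,1), (-1,2)] h * ?L [(1,-2), (-4,-1), (6,0), (-4,1), (1,2)] h)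
          \<in> O[at_right 0](\<lambda>h. h ^ (1 + 4))"
    unfolding power_add
    by (intro landau_o.big.mult stencil_comb_bigo[OF smooth])
      (auto simp: stencil_moment_def less_Suc_eq numeral_eq_Suc algebra_simps)
  ultimately show ?thesis
    unfolding tau5_def beta0_minus_beta2 mult.assoc by (simp add: sum_in_bigo)
qed

lemma omegaDS_deviation_bigo:
  fixes f :: "real \<Rightarrow> real" and \<delta> :: "real \<Rightarrow> nat \<Rightarrow> real"
  assumes smooth: "\<And>n y. ((deriv ^^ n) f has_real_derivative (deriv ^^ Suc n) f y) (at y)"
    and noncrit: "deriv f x \<noteq> 0"
    and "c > 0" and \<delta>_lower: "\<forall>\<^sub>F h in at_right 0. \<forall>l\<le>2. c \<le> \<delta> h l + C"
    and "m \<le> 2"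
  shows "(\<lambda>h. omegaDS (\<lambda>j. f (x + real_of_int j * h)) i (\<delta> h) C m - dlin m)
           \<in> O[at_right 0](\<lambda>h. h ^ 6)"
proof -
  let ?g = "\<lambda>h j. f (x + real_of_int j * h)"
  define q where "q h l = tau5 (?g h) i / betaDS (?g h) i (\<delta> h) C l" for h l
  have q_bigo: "(\<lambda>h. (q h l)\<^sup>2) \<in> O[at_right 0](\<lambda>h. h ^ 6)" if "l \<le> 2" for l
  proof -
    obtain b where "b > 0" and b: "\<forall>\<^sub>F h in at_right 0. b * h\<^sup>2 \<le> weno_beta (?g h) i l"
      using weno_beta_lower_bound[OF smooth noncrit \<open>l \<le> 2\<close>] by blast
    have "\<forall>\<^sub>F h in at_right 0. 0 < h\<^sup>2 \<and> b * c * h\<^sup>2 \<le> betaDS (?g h) i (\<delta> h) C l"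
      using b \<delta>_lower eventually_at_right_less[of 0]
    proof eventually_elim
      case (elim h)
      have "0 \<le> b * h\<^sup>2"
        using \<open>b > 0\<close> by simp
      then have "b * h\<^sup>2 * c \<le> weno_beta (?g h) i l * (\<delta> h l + C)"
        using elim \<open>c > 0\<close> \<open>l \<le> 2\<close> by (intro mult_mono) auto
      then show ?case
        using elim by (simp add: betaDS_def mult_ac)
    qed
    from bigo_divide_by_lower_bound[OF tau5_bigo[OF smooth] _ this]
    have "(\<lambda>h. q h l) \<in> O[at_right 0](\<lambda>h. h ^ 5 / h\<^sup>2)"
      using \<open>b > 0\<close> \<open>c > 0\<close> by (simp add: q_def)
    also have "(\<lambda>h::real. h ^ 5 / h\<^sup>2) = (\<lambda>h. h ^ 3)"
      by (auto simp: fun_eq_iff power2_eq_square eval_nat_numeral)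
    finally have "(\<lambda>h. q h l) \<in> O[at_right 0](\<lambda>h. h ^ 3)" .
    from landau_o.big_power[OF this, of 2] show ?thesis
      by (simp flip: power_mult)
  qed
  have "(\<lambda>h. omegaDS (?g h) i (\<delta> h) C m - dlin m) \<in> O[at_right 0](\<lambda>h. \<Sum>l<3. (q h l)\<^sup>2)"
  proof (intro bigoI[of _ 1] always_eventually allI)
    fix h
    have "\<bar>omegaDS (?g h) i (\<delta> h) C m - dlin m\<bar> \<le> (\<Sum>l<3. (q h l)\<^sup>2)"
      unfolding omegaDS_def alphaDS_def q_def[symmetric]
      using \<open>m \<le> 2\<close> by (intro normalized_weight_deviation) (auto simp: dlin_def numeral_3_eq_3)
    then show "norm (omegaDS (?g h) i (\<delta> h) C m - dlin m) \<le> 1 * norm (\<Sum>l<3. (q h l)\<^sup>2)"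
      by simp
  qed
  also have "(\<lambda>h. \<Sum>l<3. (q h l)\<^sup>2) \<in> O[at_right 0](\<lambda>h. h ^ 6)"
    using q_bigo by (intro big_sum_in_bigo) auto
  finally show ?thesis .
qed

lemma shifted_multipliers_lower_bound:
  fixes \<Phi> :: "real \<Rightarrow> real" and \<delta> :: "real \<Rightarrow> nat \<Rightarrow> real"
  assumes d1: "\<And>h. h > 0 \<Longrightarrow> \<delta> h 1 = \<Phi> h"
    and d0: "(\<lambda>h. \<delta> h 0 - \<Phi> h) \<in> O[at_right 0](\<lambda>h. h)"
    and d2: "(\<lambda>h. \<delta> h 2 - \<Phi> h) \<in> O[at_right 0](\<lambda>h. h)"
    and P_gt: "\<And>h. h > 0 \<Longrightarrow> \<Phi> h + C > \<kappa>" and "\<kappa> > 0"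
  shows "\<forall>\<^sub>F h in at_right 0. \<forall>l\<le>2. \<kappa> / 2 \<le> \<delta> h l + C"
proof -
  have close: "(\<lambda>h. (\<delta> h l + C) - (\<Phi> h + C)) \<in> o[at_right 0](\<lambda>_. 1)" if l: "l \<le> 2" for l
  proof -
    consider "l = 0" | "l = 1" | "l = 2"
      using l by linarith
    then have "(\<lambda>h. \<delta> h l - \<Phi> h) \<in> O[at_right 0](\<lambda>h. h)"
    proof cases
      case 2
      have "\<forall>\<^sub>F h in at_right 0. \<delta> h 1 - \<Phi> h = 0"
        using eventually_at_right_less[of 0] by eventually_elim (simp only: d1 diff_self)
      then show ?thesis
        unfolding 2 by (intro bigoI[of _ 0]) (auto elim!: eventually_mono)
    qed (use d0 d2 in simp_all)
    also have "(\<lambda>h::real. h) \<in> o[at_right 0](\<lambda>_. 1)"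
      by real_asymp
    finally show ?thesis
      by simp
  qed
  have P_gt': "\<forall>\<^sub>F h in at_right 0. \<kappa> < \<Phi> h + C"
    using eventually_at_right_less[of 0] by eventually_elim (rule P_gt)
  have "\<forall>\<^sub>F h in at_right 0. \<kappa> / 2 < \<delta> h l + C" if "l \<le> 2" for l
    using eventually_gt_if_close[OF close[OF that] P_gt', of "\<kappa> / 2"] \<open>\<kappa> > 0\<close> by simp
  then have "\<forall>\<^sub>F h in at_right 0. \<forall>l\<in>{..2}. \<kappa> / 2 < \<delta> h l + C"
    by (intro eventually_ball_finite) auto
  then show ?thesis
    by eventually_elim (auto intro: less_imp_le)
qed

theorem mainTheorem1:
  fixes f :: "real \<Rightarrow> real" and x :: real and k :: nat
    and \<Phi> :: "real list \<Rightarrow> real" and \<delta> :: "real \<Rightarrow> nat \<Rightarrow> real"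
    and C \<kappa> :: real
  assumes smooth: "\<And>n y. ((deriv ^^ n) f has_real_derivative (deriv ^^ Suc n) f y) (at y)"
    and noncrit: "deriv f x \<noteq> 0"
    and d1: "\<And>h. h > 0 \<Longrightarrow> \<delta> h 1 = \<Phi> (stencil x k h)"
    and d0: "(\<lambda>h. \<delta> h 0 - \<Phi> (stencil x k h)) \<in> O[at_right 0](\<lambda>h. h)"
    and d2: "(\<lambda>h. \<delta> h 2 - \<Phi> (stencil x k h)) \<in> O[at_right 0](\<lambda>h. h)"
    and kappa: "\<kappa> > 0"
    and P_gt: "\<And>h. h > 0 \<Longrightarrow> \<Phi> (stencil x k h) + C > \<kappa>"
    and P_bdd: "(\<lambda>h. \<Phi> (stencil x k h) + C) \<in> O[at_right 0](\<lambda>_. 1)"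
    and m: "m \<le> 2"
  shows "(\<lambda>h. omegaDS (\<lambda>j. f (x + real_of_int j * h)) 0 (\<delta> h) C m - dlin m)
            \<in> O[at_right 0](\<lambda>h. h ^ 6)
      \<and> (\<lambda>h. omegaDS (\<lambda>j. f (x + real_of_int j * h)) (-1) (\<delta> h) C m - dlin m)
            \<in> O[at_right 0](\<lambda>h. h ^ 6)"
proof -
  have "\<forall>\<^sub>F h in at_right 0. \<forall>l\<le>2. \<kappa> / 2 \<le> \<delta> h l + C"
    using shifted_multipliers_lower_bound[OF d1 d0 d2 P_gt kappa] .
  from omegaDS_deviation_bigo[OF smooth noncrit _ this m] show ?thesis
    using kappa by simp
qed

end
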